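(* Let $N\ge 1$, let $H\in\mathbb{C}^{N\times N}$ satisfy $H=H^\dagger=H^2$ (an orthogonal projector), let $|\psi_0\rangle\in\mathbb{C}^N$ be a unit vector and $\psi_0:=|\psi_0\rangle\langle\psi_0|$. Define $f:\mathrm{U}(N)\to\mathbb{R}$ by $f(U)=\operatorname{Tr}(HU\psi_0U^\dagger)$ and write $\psi_U:=U\psi_0U^\dagger$. Then the skew-Hermitian part of the Riemannian gradient of $f$ at $U$ is \[\widetilde{\operatorname{grad}} f(U)=[H,\psi_U]=H\psi_U-\psi_U H .\] Moreover, $\widetilde{\operatorname{grad}} f(U)=0$ if and only if $U$ is a global optimizer (global minimizer or global maximizer) of $f$ over $\mathrm{U}(N)$; and in that case $f(U)\in\{0,1\}$, where the value $0$ corresponds to the global minimum $0$ and the value $1$ to the global maximum $1$.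
   Context: $\mathrm{U}(N)=\{U\in\mathbb{C}^{N\times N}:U^\dagger U=I\}$ is regarded as a Riemannian submanifold of $\mathbb{C}^{N\times N}$ with the real inner product $\langle A,B\rangle=\operatorname{Re}\operatorname{Tr}(A^\dagger B)$ (the canonical metric induced by the Frobenius inner product). Its tangent space at $U$ is $\{\Omega U:\Omega^\dagger=-\Omega\}$. The Riemannian gradient $\operatorname{grad} f(U)$ is the unique tangent vector with $\langle \operatorname{grad} f(U),\xi\rangle=\mathrm{D}f(U)[\xi]$ for all tangent vectors $\xi$ at $U$; its skew-Hermitian part $\widetilde{\operatorname{grad}} f(U)$ is the unique skew-Hermitian matrix $\Omega$ with $\operatorname{grad} f(U)=\Omega U$. *)

theory Defs
  imports "HOL-Analysis.Analysis"
begin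

text \<open>Complex N x N matrices are modelled as complex^'n^'n for a finite index type 'n
  (so N = CARD('n) \<ge> 1). Conjugate transpose:\<close>
definition cadj :: "complex^'n^'n \<Rightarrow> complex^'n^'n" where
  "cadj A = (\<chi> i j. cnj (A $ j $ i))"

definition unitary :: "complex^'n^'n \<Rightarrow> bool" where
  "unitary U \<longleftrightarrow> cadj U ** U = mat 1"

definition minner :: "complex^'n^'n \<Rightarrow> complex^'n^'n \<Rightarrow> real" where
  "minner A B = Re (trace (cadj A ** B))"

definition skew_herm :: "complex^'n^'n \<Rightarrow> bool" where
  "skew_herm \<Omega> \<longleftrightarrow> cadj \<Omega> = - \<Omega>"

definition tangent_space :: "complex^'n^'n \<Rightarrow> (complex^'n^'n) set" where
  "tangent_space U = {\<Omega> ** U | \<Omega>. skew_herm \<Omega>}"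

definition is_riem_grad :: "(complex^'n^'n \<Rightarrow> real) \<Rightarrow> complex^'n^'n \<Rightarrow> complex^'n^'n \<Rightarrow> bool" where
  "is_riem_grad f U G \<longleftrightarrow> G \<in> tangent_space U \<and>
     (\<exists>Df. (f has_derivative Df) (at U within {V. unitary V}) \<and>
        (\<forall>\<xi>\<in>tangent_space U. minner G \<xi> = Df \<xi>))"

definition skew_grad :: "(complex^'n^'n \<Rightarrow> real) \<Rightarrow> complex^'n^'n \<Rightarrow> complex^'n^'n" where
  "skew_grad f U = (THE \<Omega>. skew_herm \<Omega> \<and> is_riem_grad f U (\<Omega> ** U))"

definition proj :: "complex^'n \<Rightarrow> complex^'n^'n" where
  "proj v = (\<chi> i j. v $ i * cnj (v $ j))"

end

theory Submission
  imports Defs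
begin

text \<open>
  Write \<phi> = U\<psi>_0. The map V \<mapsto> Re tr(H V \<psi>_0 V^\<dagger>) is the restriction of a real
  quadratic form, so its ambient derivative is explicit. Along U(N) it has the same derivative in
  every tangent direction \<Omega>U: each skew-Hermitian \<Omega> is a real combination of rank-one matrices
  i|v\<rangle>\<langle>v| with |v| = 1, and i|v\<rangle>\<langle>v|U is the velocity at 0 of the unitary curve
  t \<mapsto> (1 + (e^(it) - 1)|v\<rangle>\<langle>v|)U. Representing this derivative by the inner product gives
  the gradient [H, \<psi>_U]U.

  Since [H, \<psi>_U] = |H\<phi>\<rangle>\<langle>\<phi>| - |\<phi>\<rangle>\<langle>H\<phi>|, it vanishes iff H\<phi> = 0 or H\<phi> = \<phi>, i.e. iff
  f(U) = |H\<phi>|^2 is 0 or 1, and always 0 \<le> f \<le> 1. Conversely, U(N) acts transitively on unit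
  vectors (a phase times a Householder reflection), so if H\<phi> \<noteq> \<phi> the unit vector along
  \<phi> - H\<phi> \<in> ker H is some V\<psi>_0 with f(V) = 0, and a global minimiser must have f(U) = 0;
  dually, if H\<phi> \<noteq> 0 the value 1 is attained and a global maximiser has f(U) = 1.
\<close>

section \<open>Conjugate transpose and complex multiples of matrices\<close>

lemma cadj_component [simp]: "cadj A $ i $ j = cnj (A $ j $ i)"
  by (simp add: cadj_def)

lemma cadj_cadj [simp]: "cadj (cadj A) = A"
  by (simp add: vec_eq_iff)

lemma cadj_mult: "cadj (A ** B) = cadj B ** cadj A"
  by (simp add: vec_eq_iff matrix_matrix_mult_def mult.commute)

lemma cadj_add: "cadj (A + B) = cadj A + cadj B"
  by (simp add: vec_eq_iff)

lemma cadj_diff: "cadj (A - B) = cadj A - cadj B"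
  by (simp add: vec_eq_iff)

lemma cadj_mat_1 [simp]: "cadj (mat 1) = mat 1"
  by (simp add: vec_eq_iff mat_def)

lemma matrix_add_rdistrib: "((A::complex^'n^'m) + B) ** C = A ** C + B ** C"
  by (simp add: vec_eq_iff matrix_matrix_mult_def sum.distrib distrib_right)

lemma matrix_diff_rdistrib: "((A::complex^'n^'m) - B) ** C = A ** C - B ** C"
  by (simp add: vec_eq_iff matrix_matrix_mult_def sum_subtractf left_diff_distrib)

lemma matrix_uminus_right: "(A::complex^'n^'m) ** (- B) = - (A ** B)"
  by (simp add: vec_eq_iff matrix_matrix_mult_def sum_negf)

lemma trace_uminus: "trace (- (A::complex^'n^'n)) = - trace A"
  by (simp add: trace_def sum_negf)

text \<open>The library treats complex matrices only as a real vector space.\<close>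

definition scaleC_mat :: "complex \<Rightarrow> complex^'n^'m \<Rightarrow> complex^'n^'m" where
  "scaleC_mat c A = (\<chi> i j. c * A $ i $ j)"

lemma scaleC_mat_component [simp]: "scaleC_mat c A $ i $ j = c * A $ i $ j"
  by (simp add: scaleC_mat_def)

lemma scaleC_mat_0_left [simp]: "scaleC_mat 0 A = 0"
  by (simp add: vec_eq_iff)

lemma scaleC_mat_0_right [simp]: "scaleC_mat c 0 = 0"
  by (simp add: vec_eq_iff)

lemma scaleC_mat_1_left [simp]: "scaleC_mat 1 A = A"
  by (simp add: vec_eq_iff)

lemma scaleC_mat_scaleC_mat [simp]: "scaleC_mat a (scaleC_mat b A) = scaleC_mat (a * b) A"
  by (simp add: vec_eq_iff mult.assoc)

lemma scaleR_eq_scaleC_mat: "r *\<^sub>R A = scaleC_mat (of_real r) A"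
  by (simp add: vec_eq_iff scaleR_conv_of_real[where 'a=complex])

lemma scaleC_mat_scaleR: "scaleC_mat c (r *\<^sub>R A) = r *\<^sub>R scaleC_mat c A"
  by (simp add: vec_eq_iff scaleR_conv_of_real[where 'a=complex] mult.left_commute)

lemma cadj_scaleC_mat: "cadj (scaleC_mat c A) = scaleC_mat (cnj c) (cadj A)"
  by (simp add: vec_eq_iff)

lemma scaleC_mat_mult_left: "scaleC_mat c A ** (B::complex^'n^'m) = scaleC_mat c (A ** B)"
  by (simp add: vec_eq_iff matrix_matrix_mult_def sum_distrib_left mult.assoc)

lemma scaleC_mat_mult_right: "(A::complex^'n^'m) ** scaleC_mat c B = scaleC_mat c (A ** B)"
  by (simp add: vec_eq_iff matrix_matrix_mult_def sum_distrib_left mult_ac)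

lemma scaleC_mat_mult_vector: "scaleC_mat c A *v x = c *s (A *v x)"
  by (simp add: vec_eq_iff matrix_vector_mult_def sum_distrib_left mult.assoc)

lemma trace_scaleC_mat: "trace (scaleC_mat c (A::complex^'n^'n)) = c * trace A"
  by (simp add: trace_def sum_distrib_left)

lemma unitary_mult_cadj: "unitary U \<Longrightarrow> U ** cadj U = mat 1"
  unfolding unitary_def using matrix_left_right_inverse by blast

lemma unitary_mult: "unitary R \<Longrightarrow> unitary U \<Longrightarrow> unitary (R ** U)"
  unfolding unitary_def
  by (simp add: cadj_mult matrix_mul_assoc) (simp flip: matrix_mul_assoc)

lemma mult_one_plus_scaleC_mat_idem:
  fixes P :: "complex^'n^'n"
  assumes "P ** P = P"
  shows "(mat 1 + scaleC_mat a P) ** (mat 1 + scaleC_mat b P)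
    = mat 1 + scaleC_mat ((1 + a) * (1 + b) - 1) P"
  using assms
  by (simp add: matrix_add_ldistrib matrix_add_rdistrib scaleC_mat_mult_left scaleC_mat_mult_right)
     (simp add: vec_eq_iff algebra_simps)

lemma unitary_one_plus_scaleC_mat:
  fixes P :: "complex^'n^'n"
  assumes "cadj P = P" "P ** P = P" "cnj c * c = 1"
  shows "unitary (mat 1 + scaleC_mat (c - 1) P)"
  using assms mult_one_plus_scaleC_mat_idem[of P "cnj c - 1" "c - 1"]
  by (simp add: unitary_def cadj_add cadj_scaleC_mat)

lemma unitary_scaleC_mat: "cnj z * z = 1 \<Longrightarrow> unitary R \<Longrightarrow> unitary (scaleC_mat z R)"
  by (simp add: unitary_def cadj_scaleC_mat scaleC_mat_mult_left scaleC_mat_mult_right mult.commute)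

section \<open>Complex inner product and rank-one matrices\<close>

definition cinner :: "complex^'n \<Rightarrow> complex^'n \<Rightarrow> complex" where
  "cinner x y = (\<Sum>i\<in>UNIV. cnj (x $ i) * y $ i)"

definition outer :: "complex^'n \<Rightarrow> complex^'n \<Rightarrow> complex^'n^'n" where
  "outer x y = (\<chi> i j. x $ i * cnj (y $ j))"

lemma cinner_self: "cinner x x = of_real ((norm x)\<^sup>2)"
proof -
  have "cinner x x = (\<Sum>i\<in>UNIV. of_real ((norm (x $ i))\<^sup>2))"
    unfolding cinner_def
    by (rule sum.cong) (simp_all add: complex_norm_square[symmetric] mult.commute)
  then show ?thesis by (simp add: norm_vec_def L2_set_def sum_nonneg)
qed

lemma cnj_cinner: "cnj (cinner x y) = cinner y x"
  by (simp add: cinner_def mult.commute)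

lemma cinner_zero_right [simp]: "cinner x 0 = 0"
  by (simp add: cinner_def)

lemma cinner_diff_left: "cinner (x - y) z = cinner x z - cinner y z"
  by (simp add: cinner_def sum_subtractf left_diff_distrib)

lemma cinner_diff_right: "cinner x (y - z) = cinner x y - cinner x z"
  by (simp add: cinner_def sum_subtractf right_diff_distrib)

lemma cinner_scale_left: "cinner (c *s x) y = cnj c * cinner x y"
  by (simp add: cinner_def sum_distrib_left mult_ac)

lemma cinner_scale_right: "cinner x (c *s y) = c * cinner x y"
  by (simp add: cinner_def sum_distrib_left mult_ac)

lemma matrix_vector_mult_scaleR_right: "(A::complex^'n^'m) *v (r *\<^sub>R x) = r *\<^sub>R (A *v x)"
  by (rule linear_cmul[OF matrix_vector_mul_linear])

lemma cinner_scaleR_left: "cinner (r *\<^sub>R x) y = of_real r * cinner x y"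
  by (simp add: cinner_def sum_distrib_left scaleR_conv_of_real[where 'a=complex] mult.assoc)

lemma inner_eq_Re_cinner: "inner x y = Re (cinner x y)"
  by (simp add: inner_vec_def inner_complex_def cinner_def)

lemma cinner_matrix_vector_mult: "cinner (A *v x) y = cinner x (cadj A *v y)"
  unfolding cinner_def matrix_vector_mult_def
  by (simp add: sum_distrib_left sum_distrib_right mult_ac) (rule sum.swap)

lemma cinner_self_adjoint: "cadj H = H \<Longrightarrow> cinner (H *v x) y = cinner x (H *v y)"
  by (simp add: cinner_matrix_vector_mult)

lemma norm_eq_if_cinner_self_eq:
  assumes "cinner x x = cinner y y"
  shows "norm x = norm y"
proof -
  have "(norm x)\<^sup>2 = (norm y)\<^sup>2"
    using assms by (simp only: cinner_self of_real_eq_iff)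
  then show ?thesis
    by (simp add: power2_eq_iff_nonneg)
qed

lemma norm_unitary_mult: "unitary V \<Longrightarrow> norm (V *v x) = norm x"
  by (rule norm_eq_if_cinner_self_eq)
     (simp add: unitary_def cinner_matrix_vector_mult matrix_vector_mul_assoc)

lemma norm_scale_phase: "cnj z * z = 1 \<Longrightarrow> norm (z *s x) = norm x"
  by (rule norm_eq_if_cinner_self_eq) (metis cinner_scale_left cinner_scale_right mult.assoc mult_1)

lemma outer_component [simp]: "outer x y $ i $ j = x $ i * cnj (y $ j)"
  by (simp add: outer_def)

lemma outer_0 [simp]: "outer 0 y = 0" "outer x 0 = 0"
  by (simp_all add: vec_eq_iff)

lemma proj_eq_outer: "proj v = outer v v"
  by (simp add: proj_def outer_def)

lemma cadj_outer: "cadj (outer x y) = outer y x"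
  by (simp add: vec_eq_iff)

lemma matrix_mult_outer: "A ** outer x y = outer (A *v x) y"
  by (simp add: vec_eq_iff matrix_matrix_mult_def matrix_vector_mult_def sum_distrib_right
      sum_distrib_left mult_ac)

lemma outer_mult_matrix: "outer x y ** B = outer x (cadj B *v y)"
  by (simp add: vec_eq_iff matrix_matrix_mult_def matrix_vector_mult_def sum_distrib_left mult_ac)

lemma outer_mult_vector: "outer x y *v z = cinner y z *s x"
  by (simp add: vec_eq_iff matrix_vector_mult_def cinner_def sum_distrib_left sum_distrib_right
      mult_ac)

lemma outer_mult_outer: "outer x y ** outer z w = scaleC_mat (cinner y z) (outer x w)"
  by (simp add: vec_eq_iff matrix_matrix_mult_def cinner_def sum_distrib_left sum_distrib_right
      mult_ac)

lemma trace_mult_outer: "trace (A ** outer x y) = cinner y (A *v x)"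
  by (simp add: trace_def matrix_mult_outer cinner_def mult.commute)

lemma cadj_proj [simp]: "cadj (proj v) = proj v"
  by (simp add: proj_eq_outer cadj_outer)

lemma proj_0 [simp]: "proj 0 = 0"
  by (simp add: vec_eq_iff proj_def)

lemma proj_scaleR: "proj (r *\<^sub>R v) = r\<^sup>2 *\<^sub>R proj v"
  by (simp add: vec_eq_iff proj_def power2_eq_square scaleR_conv_of_real[where 'a=complex])

lemma proj_idem: "norm v = 1 \<Longrightarrow> proj v ** proj v = proj v"
  by (simp add: proj_eq_outer outer_mult_outer cinner_self)

lemma mult_proj_mult_cadj: "A ** proj v ** cadj A = proj (A *v v)"
  by (simp add: proj_eq_outer matrix_mult_outer outer_mult_matrix)

section \<open>Derivatives along the unitary group\<close>

lemma has_derivative_within_eq_along_curve: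
  fixes c :: "real \<Rightarrow> 'a::real_normed_vector" and f :: "'a \<Rightarrow> 'b::real_normed_vector"
  assumes c_in: "\<And>t. c t \<in> S" and c_0: "c 0 = x" and c': "(c has_vector_derivative v) (at 0)"
    and Df: "(f has_derivative Df) (at x within S)" and D: "(f has_derivative D) (at x)"
  shows "Df v = D v"
proof -
  have c_deriv: "(c has_derivative (\<lambda>t. t *\<^sub>R v)) (at 0)"
    using c' by (simp add: has_vector_derivative_def)
  have "(f has_derivative Df) (at (c 0) within range c)"
    unfolding c_0 by (rule has_derivative_subset[OF Df]) (use c_in in auto)
  then have "((\<lambda>t. f (c t)) has_derivative (\<lambda>t. Df (t *\<^sub>R v))) (at 0)"
    using has_derivative_in_compose[OF c_deriv] by simp
  moreover have "((\<lambda>t. f (c t)) has_derivative (\<lambda>t. D (t *\<^sub>R v))) (at 0)"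
    using has_derivative_compose[OF c_deriv] D c_0 by simp
  ultimately have "(\<lambda>t. Df (t *\<^sub>R v)) = (\<lambda>t. D (t *\<^sub>R v))"
    by (rule has_derivative_unique)
  then show ?thesis
    by (metis scaleR_one)
qed

lemma phase_curve_has_vector_derivative:
  "((\<lambda>t. U + scaleC_mat (exp (\<i> * of_real t) - 1) M) has_vector_derivative scaleC_mat \<i> M) (at 0)"
proof -
  have "((\<lambda>z. exp (\<i> * z) - 1) has_field_derivative \<i>) (at (of_real 0))"
    by (auto intro!: derivative_eq_intros)
  then have "((\<lambda>t. exp (\<i> * of_real t) - 1) has_vector_derivative \<i>) (at 0)"
    by (rule has_vector_derivative_real_field)
  moreover have "bounded_linear (\<lambda>z. scaleC_mat z M)"
    by (intro linear_conv_bounded_linear[THEN iffD1] linearI)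
       (simp_all add: vec_eq_iff scaleR_eq_scaleC_mat scaleR_conv_of_real[where 'a=complex]
         algebra_simps)
  ultimately have "((\<lambda>t. scaleC_mat (exp (\<i> * of_real t) - 1) M) has_vector_derivative
      scaleC_mat \<i> M) (at 0)"
    by (rule bounded_linear.has_vector_derivative[rotated])
  then show ?thesis
    by (simp add: has_vector_derivative_add_const add.commute[of U])
qed

lemma derivative_within_unitary_phase_direction:
  assumes U: "unitary U" and Df: "(f has_derivative Df) (at U within {V. unitary V})"
    and D: "(f has_derivative D) (at U)" and v: "norm v = 1"
  shows "Df (scaleC_mat \<i> (proj v) ** U) = D (scaleC_mat \<i> (proj v) ** U)"
proof (rule has_derivative_within_eq_along_curve[OF _ _ _ Df D])
  let ?c = "\<lambda>t. (mat 1 + scaleC_mat (exp (\<i> * of_real t) - 1) (proj v)) ** U"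
  show "?c t \<in> {V. unitary V}" for t
  proof -
    have "cnj (exp (\<i> * of_real t)) * exp (\<i> * of_real t) = 1"
      by (simp add: exp_cnj exp_add[symmetric])
    then show ?thesis
      using unitary_mult[OF unitary_one_plus_scaleC_mat[OF cadj_proj proj_idem[OF v]] U] by simp
  qed
  show "?c 0 = U"
    by simp
  have "?c = (\<lambda>t. U + scaleC_mat (exp (\<i> * of_real t) - 1) (proj v ** U))"
    by (simp add: matrix_add_rdistrib scaleC_mat_mult_left)
  then show "(?c has_vector_derivative scaleC_mat \<i> (proj v) ** U) (at 0)"
    using phase_curve_has_vector_derivative by (simp add: scaleC_mat_mult_left)
qed

lemma sum_outer_columns: "(\<Sum>k\<in>UNIV. outer (A *v axis k 1) (axis k 1)) = A"
  by (simp add: vec_eq_iff matrix_vector_mult_def axis_def sum_component if_distrib if_distribR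
      sum.delta' cong: if_cong)

lemma sum_outer_columns_cadj: "(\<Sum>k\<in>UNIV. outer (axis k 1) (A *v axis k 1)) = cadj A"
  by (simp add: vec_eq_iff matrix_vector_mult_def axis_def sum_component if_distrib if_distribR
      sum.delta' cong: if_cong)

lemma polarization_outer:
  "outer x y - outer y x
    = (1/2) *\<^sub>R (scaleC_mat \<i> (proj (x + \<i> *s y)) - scaleC_mat \<i> (proj (x - \<i> *s y)))"
  by (simp add: vec_eq_iff proj_def scaleR_conv_of_real[where 'a=complex] algebra_simps)

lemma phase_proj_in_span: "scaleC_mat \<i> (proj w) \<in> span {scaleC_mat \<i> (proj v) | v. norm v = 1}"
proof (cases "w = 0")
  case True
  then show ?thesis
    by (simp add: span_zero)
next
  case False
  define v where "v = (1 / norm w) *\<^sub>R w"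
  have "norm v = 1"
    using False by (simp add: v_def)
  moreover have "w = norm w *\<^sub>R v"
    using False by (simp add: v_def)
  then have "scaleC_mat \<i> (proj w) = (norm w)\<^sup>2 *\<^sub>R scaleC_mat \<i> (proj v)"
    by (metis proj_scaleR scaleC_mat_scaleR)
  ultimately show ?thesis
    by (auto intro: span_scale span_base)
qed

lemma skew_herm_in_span_phase_projs:
  fixes \<Omega> :: "complex^'n^'n"
  assumes "skew_herm \<Omega>"
  shows "\<Omega> \<in> span {scaleC_mat \<i> (proj v) | v. norm v = 1}"
proof -
  define e where "e k = axis k (1::complex)" for k :: 'n
  define c where "c k = \<Omega> *v e k" for k
  let ?S = "{scaleC_mat \<i> (proj v) | v. norm v = 1}"
  txt \<open>Expand \<Omega> - \<Omega>^\<dagger> = 2\<Omega> over the columns of \<Omega>, then polarize.\<close>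
  have "\<Omega> - cadj \<Omega> = (\<Sum>k\<in>UNIV. outer (c k) (e k) - outer (e k) (c k))"
    by (simp add: c_def e_def sum_subtractf sum_outer_columns sum_outer_columns_cadj)
  also have "\<dots> = (\<Sum>k\<in>UNIV. (1/2) *\<^sub>R
      (scaleC_mat \<i> (proj (c k + \<i> *s e k)) - scaleC_mat \<i> (proj (c k - \<i> *s e k))))"
    by (simp only: polarization_outer)
  also have "\<dots> \<in> span ?S"
    by (intro span_sum span_scale span_diff phase_proj_in_span)
  finally have "(1/2) *\<^sub>R (\<Omega> - cadj \<Omega>) \<in> span ?S"
    by (rule span_scale)
  moreover have "(1/2) *\<^sub>R (\<Omega> - cadj \<Omega>) = \<Omega>"
    using assms by (simp add: skew_herm_def vec_eq_iff)
  ultimately show ?thesis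
    by simp
qed

lemma derivative_within_unitary_eq_on_tangent:
  fixes U :: "complex^'n^'n"
  assumes U: "unitary U" and Df: "(f has_derivative Df) (at U within {V. unitary V})"
    and D: "(f has_derivative D) (at U)" and \<Omega>: "skew_herm \<Omega>"
  shows "Df (\<Omega> ** U) = D (\<Omega> ** U)"
proof -
  have "linear (\<lambda>M::complex^'n^'n. M ** U)"
    by (rule linearI) (simp_all add: matrix_add_rdistrib scalar_matrix_assoc)
  then have lin_Df: "linear (\<lambda>M. Df (M ** U))" and lin_D: "linear (\<lambda>M. D (M ** U))"
    using linear_compose has_derivative_linear[OF Df] has_derivative_linear[OF D]
    by (auto simp: o_def)
  show ?thesis
  proof (rule linear_eq_on_span[OF lin_Df lin_D _ skew_herm_in_span_phase_projs[OF \<Omega>]])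
    fix M :: "complex^'n^'n"
    assume "M \<in> {scaleC_mat \<i> (proj v) | v. norm v = 1}"
    then show "Df (M ** U) = D (M ** U)"
      using derivative_within_unitary_phase_direction[OF U Df D] by blast
  qed
qed

section \<open>The Riemannian gradient\<close>

lemma minner_eq_inner: "minner A B = inner A B"
  unfolding minner_def trace_def matrix_matrix_mult_def inner_vec_def inner_complex_def
  by simp (rule sum.swap)

lemma skew_grad_eqI:
  fixes U G :: "complex^'n^'n"
  assumes U: "unitary U" and D: "(f has_derivative D) (at U)" and G: "skew_herm G"
    and D_eq: "\<And>\<Omega>. skew_herm \<Omega> \<Longrightarrow> D (\<Omega> ** U) = minner (G ** U) (\<Omega> ** U)"
  shows "skew_grad f U = G"
  unfolding skew_grad_def
proof (rule the_equality)
  show "skew_herm G \<and> is_riem_grad f U (G ** U)"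
    unfolding is_riem_grad_def tangent_space_def
    using G D D_eq by (auto intro!: exI[of _ D] has_derivative_at_withinI)
next
  fix \<Omega> assume "skew_herm \<Omega> \<and> is_riem_grad f U (\<Omega> ** U)"
  then obtain Df where \<Omega>: "skew_herm \<Omega>"
    and Df: "(f has_derivative Df) (at U within {V. unitary V})"
    and Df_eq: "\<forall>\<xi>\<in>tangent_space U. minner (\<Omega> ** U) \<xi> = Df \<xi>"
    unfolding is_riem_grad_def by blast
  txt \<open>A derivative within U(N) need not be unique, but it agrees with D on tangent vectors.\<close>
  define X where "X = \<Omega> - G"
  have X: "skew_herm X"
    using \<Omega> G by (simp add: X_def skew_herm_def cadj_diff)
  then have "X ** U \<in> tangent_space U"
    unfolding tangent_space_def by blast
  then have "minner (\<Omega> ** U) (X ** U) = minner (G ** U) (X ** U)"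
    using Df_eq derivative_within_unitary_eq_on_tangent[OF U Df D X] D_eq[OF X] by simp
  then have "inner (X ** U) (X ** U) = 0"
    by (simp add: X_def matrix_diff_rdistrib minner_eq_inner inner_diff_left)
  then have "X ** U ** cadj U = 0"
    by simp
  then show "\<Omega> = G"
    by (simp add: X_def unitary_mult_cadj[OF U] flip: matrix_mul_assoc)
qed

lemma has_derivative_trace_quadratic:
  fixes H P U :: "complex^'n^'n"
  shows "((\<lambda>V. Re (trace (H ** V ** P ** cadj V))) has_derivative
     (\<lambda>X. Re (trace (H ** U ** P ** cadj X)) + Re (trace (H ** X ** P ** cadj U)))) (at U)"
proof -
  have "bounded_bilinear (\<lambda>X Y :: complex^'n^'n. Re (trace (H ** X ** P ** cadj Y)))"
    unfolding bilinear_conv_bounded_bilinear[symmetric] bilinear_def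
    by (auto intro!: linearI simp: cadj_add matrix_add_ldistrib matrix_add_rdistrib trace_add
        scaleR_eq_scaleC_mat cadj_scaleC_mat scaleC_mat_mult_left scaleC_mat_mult_right
        trace_scaleC_mat)
  then show ?thesis
    using bounded_bilinear.FDERIV[OF _ has_derivative_ident has_derivative_ident] by blast
qed

lemma derivative_trace_quadratic_tangent:
  fixes H P U \<Omega> :: "complex^'n^'n"
  assumes H: "cadj H = H" and P: "cadj P = P" and U: "unitary U" and \<Omega>: "skew_herm \<Omega>"
  defines "\<psi> \<equiv> U ** P ** cadj U"
  shows "Re (trace (H ** U ** P ** cadj (\<Omega> ** U))) + Re (trace (H ** (\<Omega> ** U) ** P ** cadj U))
    = minner ((H ** \<psi> - \<psi> ** H) ** U) (\<Omega> ** U)"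
proof -
  have \<psi>_adj: "cadj \<psi> = \<psi>"
    by (simp add: \<psi>_def cadj_mult P matrix_mul_assoc)
  have adj_term: "H ** U ** P ** cadj (\<Omega> ** U) = - (H ** \<psi> ** \<Omega>)"
    using \<Omega> by (simp add: skew_herm_def \<psi>_def cadj_mult matrix_uminus_right matrix_mul_assoc)
  have mid_term: "H ** (\<Omega> ** U) ** P ** cadj U = H ** \<Omega> ** \<psi>"
    by (simp add: \<psi>_def matrix_mul_assoc)
  have "minner ((H ** \<psi> - \<psi> ** H) ** U) (\<Omega> ** U)
      = Re (trace (cadj U ** ((\<psi> ** H - H ** \<psi>) ** \<Omega> ** U)))"
    by (simp add: minner_def cadj_mult cadj_diff H \<psi>_adj matrix_mul_assoc)
  also have "\<dots> = Re (trace ((\<psi> ** H - H ** \<psi>) ** \<Omega> ** (U ** cadj U)))"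
    using trace_mul_sym[of "cadj U" "(\<psi> ** H - H ** \<psi>) ** \<Omega> ** U"]
    by (simp add: matrix_mul_assoc)
  also have "\<dots> = Re (trace (\<psi> ** H ** \<Omega>)) - Re (trace (H ** \<psi> ** \<Omega>))"
    by (simp add: unitary_mult_cadj[OF U] matrix_diff_rdistrib trace_sub)
  also have "\<dots> = Re (trace (H ** \<Omega> ** \<psi>)) - Re (trace (H ** \<psi> ** \<Omega>))"
    using trace_mul_sym[of \<psi> "H ** \<Omega>"] by (simp add: matrix_mul_assoc)
  finally show ?thesis
    by (simp add: adj_term mid_term trace_uminus)
qed

lemma skew_grad_trace_quadratic:
  fixes H P U :: "complex^'n^'n"
  assumes H: "cadj H = H" and P: "cadj P = P" and U: "unitary U"
  defines "\<psi> \<equiv> U ** P ** cadj U"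
  shows "skew_grad (\<lambda>V. Re (trace (H ** V ** P ** cadj V))) U = H ** \<psi> - \<psi> ** H"
proof (rule skew_grad_eqI[OF U has_derivative_trace_quadratic])
  show "skew_herm (H ** \<psi> - \<psi> ** H)"
    by (simp add: skew_herm_def \<psi>_def cadj_diff cadj_mult H P matrix_mul_assoc)
qed (use derivative_trace_quadratic_tangent[OF H P U] in \<open>simp add: \<psi>_def\<close>)

section \<open>Critical points of the projector expectation\<close>

lemma norm_projector_pythagoras:
  assumes H: "cadj H = H" "H ** H = H"
  shows "(norm x)\<^sup>2 = (norm (H *v x))\<^sup>2 + (norm (x - H *v x))\<^sup>2"
proof -
  have "cinner (H *v x) (x - H *v x) = cinner x (H *v x - (H ** H) *v x)"
    by (simp add: cinner_self_adjoint[OF H(1)] matrix_vector_mult_diff_distrib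
        matrix_vector_mul_assoc)
  then have "inner (H *v x) (x - H *v x) = 0"
    by (simp add: inner_eq_Re_cinner H(2))
  then show ?thesis
    using norm_add_Pythagorean[of "H *v x" "x - H *v x"] by (simp add: orthogonal_def)
qed

lemma norm_projector_le:
  assumes "cadj H = H" "H ** H = H"
  shows "(norm (H *v x))\<^sup>2 \<le> (norm x)\<^sup>2"
  using norm_projector_pythagoras[OF assms, of x] by simp

lemma projector_eq_self_iff_norm:
  assumes H: "cadj H = H" "H ** H = H" and x: "norm x = 1"
  shows "H *v x = x \<longleftrightarrow> (norm (H *v x))\<^sup>2 = 1"
  using norm_projector_pythagoras[OF H, of x] x by auto

lemma trace_quadratic_proj_eq_norm:
  assumes H: "cadj H = H" "H ** H = H"
  shows "Re (trace (H ** V ** proj \<psi> ** cadj V)) = (norm (H *v (V *v \<psi>)))\<^sup>2"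
proof -
  define \<phi> where "\<phi> = V *v \<psi>"
  have "H ** V ** proj \<psi> ** cadj V = H ** outer \<phi> \<phi>"
    using mult_proj_mult_cadj[of V \<psi>] by (simp add: \<phi>_def proj_eq_outer flip: matrix_mul_assoc)
  then have "trace (H ** V ** proj \<psi> ** cadj V) = cinner \<phi> (H *v \<phi>)"
    by (simp add: trace_mult_outer)
  also have "\<dots> = cinner (H *v \<phi>) (H *v \<phi>)"
    using H by (simp add: cinner_self_adjoint matrix_vector_mul_assoc)
  finally show ?thesis
    by (simp add: \<phi>_def cinner_self)
qed

lemma commutator_proj_eq_0_iff:
  assumes H: "cadj H = H" "H ** H = H" and \<phi>: "norm \<phi> = 1"
  shows "H ** proj \<phi> - proj \<phi> ** H = 0 \<longleftrightarrow> H *v \<phi> = 0 \<or> H *v \<phi> = \<phi>"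
proof -
  let ?a = "H *v \<phi>"
  have comm: "H ** proj \<phi> - proj \<phi> ** H = outer ?a \<phi> - outer \<phi> ?a"
    by (simp add: proj_eq_outer matrix_mult_outer outer_mult_matrix H(1))
  show ?thesis
  proof
    assume "H ** proj \<phi> - proj \<phi> ** H = 0"
    then have "(outer ?a \<phi> - outer \<phi> ?a) *v \<phi> = 0"
      by (simp add: comm)
    then have a: "?a = cinner ?a \<phi> *s \<phi>"
      using \<phi> by (simp add: matrix_vector_mult_diff_rdistrib outer_mult_vector cinner_self)
    have "?a = H *v ?a"
      by (simp add: matrix_vector_mul_assoc H(2))
    also have "\<dots> = cinner ?a \<phi> *s ?a"
      by (subst a) (simp add: vector_scalar_commute)
    finally have "(1 - cinner ?a \<phi>) *s ?a = 0"
      by (simp add: vector_sadd_rdistrib)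
    then have "1 = cinner ?a \<phi> \<or> ?a = 0"
      by (simp only: vector_mul_eq_0 right_minus_eq)
    then show "?a = 0 \<or> ?a = \<phi>"
      using a by auto
  qed (auto simp: comm)
qed

lemma unit_eigenvector_exists:
  fixes A :: "complex^'n^'n"
  assumes "x \<noteq> 0" and "A *v x = c *s x"
  shows "\<exists>w. norm w = 1 \<and> A *v w = c *s w"
proof (intro exI conjI)
  show "norm ((1 / norm x) *\<^sub>R x) = 1"
    using assms(1) by simp
  show "A *v ((1 / norm x) *\<^sub>R x) = c *s ((1 / norm x) *\<^sub>R x)"
    using assms(2) by (simp add: matrix_vector_mult_scaleR_right) (simp add: vec_eq_iff)
qed

lemma householder_reflection_exists:
  assumes \<phi>: "norm \<phi> = 1" and w: "norm w = 1" and r: "cinner w \<phi> = of_real r"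
  shows "\<exists>R. unitary R \<and> R *v \<phi> = w"
proof (cases "w = \<phi>")
  case True
  then show ?thesis
    by (intro exI[of _ "mat 1"]) (simp add: unitary_def)
next
  case False
  define v where "v = \<phi> - w"
  define u where "u = (1 / norm v) *\<^sub>R v"
  define R where "R = mat 1 + scaleC_mat (- 2) (proj u)"
  have v: "v \<noteq> 0"
    using False by (simp add: v_def)
  have u: "norm u = 1"
    using v by (simp add: u_def)
  have \<phi>\<phi>: "cinner \<phi> \<phi> = 1" and ww: "cinner w w = 1"
    using \<phi> w by (simp_all add: cinner_self)
  have r': "cinner \<phi> w = of_real r"
    using r cnj_cinner[of w \<phi>] by simp
  have v_\<phi>: "cinner v \<phi> = 1 - of_real r"
    by (simp add: v_def cinner_diff_left \<phi>\<phi> r)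
  have "of_real ((norm v)\<^sup>2) = cinner v v"
    by (simp add: cinner_self)
  also have "\<dots> = 2 * (1 - of_real r)"
    by (simp add: v_def cinner_diff_left cinner_diff_right \<phi>\<phi> ww r r')
  finally have norm_v: "(of_real ((norm v)\<^sup>2) :: complex) = 2 * (1 - of_real r)" .
  have "R *v \<phi> = \<phi> - (2 / of_real ((norm v)\<^sup>2) * cinner v \<phi>) *s v"
    by (simp add: R_def matrix_vector_mult_add_rdistrib scaleC_mat_mult_vector proj_eq_outer
        outer_mult_vector u_def cinner_scaleR_left)
       (simp add: vec_eq_iff scaleR_conv_of_real[where 'a=complex] power2_eq_square)
  also have "2 / of_real ((norm v)\<^sup>2) * cinner v \<phi> = 1"
  proof -
    have "(of_real ((norm v)\<^sup>2) :: complex) \<noteq> 0"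
      using v by simp
    then show ?thesis
      unfolding norm_v v_\<phi> by simp
  qed
  finally have "R *v \<phi> = w"
    by (simp add: v_def)
  moreover have "unitary R"
    using unitary_one_plus_scaleC_mat[OF cadj_proj proj_idem[OF u], of "- 1"] by (simp add: R_def)
  ultimately show ?thesis
    by blast
qed

lemma unitary_maps_unit_vector:
  assumes \<phi>: "norm \<phi> = 1" and w: "norm w = 1"
  shows "\<exists>R. unitary R \<and> R *v \<phi> = w"
proof -
  define c where "c = cinner w \<phi>"
  txt \<open>A phase z making the inner product of z w with \<phi> real, as a Householder reflection needs.\<close>
  define z where "z = (if c = 0 then 1 else c / of_real (cmod c))"
  have c_sq: "cnj c * c = of_real (cmod c) * of_real (cmod c)"
    using complex_norm_square[of c] by (simp add: power2_eq_square mult.commute)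
  have z: "cnj z * z = 1"
    by (simp add: z_def c_sq)
  have "cinner (z *s w) \<phi> = of_real (cmod c)"
    by (simp add: cinner_scale_left z_def c_def[symmetric] c_sq)
  then obtain R where R: "unitary R" "R *v \<phi> = z *s w"
    using householder_reflection_exists[OF \<phi>] w norm_scale_phase[OF z] by metis
  have "unitary (scaleC_mat (cnj z) R)"
    using unitary_scaleC_mat[OF _ R(1)] z by (simp add: mult.commute)
  moreover have "scaleC_mat (cnj z) R *v \<phi> = w"
    using z by (simp add: scaleC_mat_mult_vector R(2) vector_smult_assoc)
  ultimately show ?thesis
    by blast
qed

lemma projector_expectation_global_min:
  assumes H: "H ** H = H" and \<psi>: "norm \<psi> = 1"
    and min: "\<forall>V. unitary V \<longrightarrow> (norm (H *v \<phi>))\<^sup>2 \<le> (norm (H *v (V *v \<psi>)))\<^sup>2"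
  shows "H *v \<phi> = 0 \<or> H *v \<phi> = \<phi>"
proof (rule disjCI)
  assume "H *v \<phi> \<noteq> \<phi>"
  then have "\<phi> - H *v \<phi> \<noteq> 0"
    by simp
  moreover have "H *v (\<phi> - H *v \<phi>) = 0 *s (\<phi> - H *v \<phi>)"
    using H by (simp add: matrix_vector_mult_diff_distrib matrix_vector_mul_assoc)
  ultimately obtain w where "norm w = 1" "H *v w = 0"
    using unit_eigenvector_exists by fastforce
  then obtain V where "unitary V" "H *v (V *v \<psi>) = 0"
    using unitary_maps_unit_vector[OF \<psi>] by metis
  then show "H *v \<phi> = 0"
    using min by fastforce
qed

lemma projector_expectation_global_max:
  assumes H: "cadj H = H" "H ** H = H" and \<psi>: "norm \<psi> = 1" and \<phi>: "norm \<phi> = 1"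
    and max: "\<forall>V. unitary V \<longrightarrow> (norm (H *v (V *v \<psi>)))\<^sup>2 \<le> (norm (H *v \<phi>))\<^sup>2"
  shows "H *v \<phi> = 0 \<or> H *v \<phi> = \<phi>"
proof (cases "H *v \<phi> = 0")
  case False
  moreover have "H *v (H *v \<phi>) = 1 *s (H *v \<phi>)"
    using H(2) by (simp add: matrix_vector_mul_assoc)
  ultimately obtain w where "norm w = 1" "H *v w = w"
    using unit_eigenvector_exists by fastforce
  then obtain V where "unitary V" "H *v (V *v \<psi>) = V *v \<psi>"
    using unitary_maps_unit_vector[OF \<psi>] by metis
  then have "1 \<le> (norm (H *v \<phi>))\<^sup>2"
    using max \<psi> by (metis norm_unitary_mult power_one)
  moreover have "(norm (H *v \<phi>))\<^sup>2 \<le> 1"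
    using norm_projector_le[OF H, of \<phi>] \<phi> by simp
  ultimately show ?thesis
    using projector_eq_self_iff_norm[OF H \<phi>] by simp
qed simp

theorem theorem4p1:
  fixes H :: "complex^'n^'n" and psi0 :: "complex^'n"
    and f :: "complex^'n^'n \<Rightarrow> real" and U :: "complex^'n^'n"
  assumes herm: "cadj H = H" and idem: "H ** H = H"
    and unit: "norm psi0 = 1"
    and f_def: "\<And>V. f V = Re (trace (H ** V ** proj psi0 ** cadj V))"
    and U: "unitary U"
  shows "skew_grad f U = H ** (U ** proj psi0 ** cadj U) - (U ** proj psi0 ** cadj U) ** H
         \<and> (skew_grad f U = 0 \<longleftrightarrow>
              ((\<forall>V. unitary V \<longrightarrow> f U \<le> f V) \<or> (\<forall>V. unitary V \<longrightarrow> f V \<le> f U)))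
         \<and> (skew_grad f U = 0 \<longrightarrow>
              f U \<in> {0, 1}
              \<and> (f U = 0 \<longrightarrow> (\<forall>V. unitary V \<longrightarrow> f U \<le> f V))
              \<and> (f U = 1 \<longrightarrow> (\<forall>V. unitary V \<longrightarrow> f V \<le> f U)))"
proof -
  define \<phi> where "\<phi> = U *v psi0"
  have \<phi>: "norm \<phi> = 1"
    using unit U by (simp add: \<phi>_def norm_unitary_mult)
  have f_norm: "f V = (norm (H *v (V *v psi0)))\<^sup>2" for V
    using f_def trace_quadratic_proj_eq_norm[OF herm idem] by simp
  have "f = (\<lambda>V. Re (trace (H ** V ** proj psi0 ** cadj V)))"
    using f_def by blast
  then have grad: "skew_grad f U = H ** proj \<phi> - proj \<phi> ** H"
    using skew_grad_trace_quadratic[OF herm cadj_proj U] by (simp add: mult_proj_mult_cadj \<phi>_def)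
  have crit: "skew_grad f U = 0 \<longleftrightarrow> H *v \<phi> = 0 \<or> H *v \<phi> = \<phi>"
    unfolding grad by (rule commutator_proj_eq_0_iff[OF herm idem \<phi>])
  have range: "0 \<le> f V \<and> f V \<le> 1" if "unitary V" for V
    using norm_projector_le[OF herm idem, of "V *v psi0"] unit that
    by (simp add: f_norm norm_unitary_mult)
  have f_U: "H *v \<phi> = 0 \<Longrightarrow> f U = 0" "H *v \<phi> = \<phi> \<Longrightarrow> f U = 1"
    using \<phi> by (simp_all add: f_norm \<phi>_def)
  have extremal: "H *v \<phi> = 0 \<or> H *v \<phi> = \<phi>"
    if "(\<forall>V. unitary V \<longrightarrow> f U \<le> f V) \<or> (\<forall>V. unitary V \<longrightarrow> f V \<le> f U)"
    using that projector_expectation_global_min[OF idem unit]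
      projector_expectation_global_max[OF herm idem unit \<phi>]
    by (auto simp: f_norm \<phi>_def)
  show ?thesis
    using grad crit range f_U extremal by (auto simp: mult_proj_mult_cadj \<phi>_def)
qed

end
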